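(* Every extreme point of the elliptope $\mathcal{E}_n$ is an extreme point of $\mathrm{Cor}(n,n)$.
   Context: $\mathcal{E}_n:=\{X\in\mathcal{S}^n_+: X_{ii}=1\ \forall i\in[n]\}$, where $\mathcal{S}^n_+$ is the set of real symmetric positive semidefinite $n\times n$ matrices. $\mathrm{Cor}(n,n)$ is the convex set of matrices $C=(c_{xy})\in[-1,1]^{n\times n}$ for which there exist $d\ge1$, Hermitian $d\times d$ matrices $M_1,\dots,M_n,N_1,\dots,N_n$ with eigenvalues in $[-1,1]$ and a Hermitian psd trace-one matrix $\rho$ on $\mathbb{C}^d\otimes\mathbb{C}^d$ with $c_{xy}=\mathrm{Tr}((M_x\otimes N_y)\rho)$ for all $x,y$; equivalently (Tsirelson), $C\in\mathrm{Cor}(n,n)$ iff there are unit vectors $u_x,v_y\in\mathbb{R}^{2n}$ with $c_{xy}=\langle u_x,v_y\rangle$. *)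

theory Defs
  imports "HOL-Analysis.Analysis"
begin

text \<open>Real n x n matrices are rendered as real^'n^'n with a finite index type 'n
  (so n = CARD('n)). Complex d x d matrices (d a natural number that is existentially
  quantified) are rendered as functions nat => nat => complex, only entries with
  indices < d being relevant. The space C^d tensor C^d is identified with C^(d*d)
  via the index (i,j) |-> i*d + j.\<close>

definition elliptope :: "(real^'n^'n) set" where
  "elliptope = {X. transpose X = X \<and> (\<forall>v. 0 \<le> v \<bullet> (X *v v)) \<and> (\<forall>i. X $ i $ i = 1)}"

definition hermitian_mat :: "nat \<Rightarrow> (nat \<Rightarrow> nat \<Rightarrow> complex) \<Rightarrow> bool" where
  "hermitian_mat d M \<longleftrightarrow> (\<forall>i<d. \<forall>j<d. M i j = cnj (M j i))"

definition is_eigenvalue :: "nat \<Rightarrow> (nat \<Rightarrow> nat \<Rightarrow> complex) \<Rightarrow> complex \<Rightarrow> bool" where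
  "is_eigenvalue d M ev \<longleftrightarrow>
     (\<exists>v :: nat \<Rightarrow> complex. (\<exists>i<d. v i \<noteq> 0) \<and> (\<forall>i<d. (\<Sum>j<d. M i j * v j) = ev * v i))"

definition psd_mat :: "nat \<Rightarrow> (nat \<Rightarrow> nat \<Rightarrow> complex) \<Rightarrow> bool" where
  "psd_mat d R \<longleftrightarrow> hermitian_mat d R \<and>
     (\<forall>v :: nat \<Rightarrow> complex. let q = (\<Sum>i<d. \<Sum>j<d. cnj (v i) * R i j * v j) in q \<in> \<real> \<and> 0 \<le> Re q)"

definition trace_mat :: "nat \<Rightarrow> (nat \<Rightarrow> nat \<Rightarrow> complex) \<Rightarrow> complex" where
  "trace_mat d R = (\<Sum>i<d. R i i)"

definition kron :: "nat \<Rightarrow> (nat \<Rightarrow> nat \<Rightarrow> complex) \<Rightarrow> (nat \<Rightarrow> nat \<Rightarrow> complex) \<Rightarrow> (nat \<Rightarrow> nat \<Rightarrow> complex)" where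
  "kron d A B = (\<lambda>i j. A (i div d) (j div d) * B (i mod d) (j mod d))"

definition mat_mult :: "nat \<Rightarrow> (nat \<Rightarrow> nat \<Rightarrow> complex) \<Rightarrow> (nat \<Rightarrow> nat \<Rightarrow> complex) \<Rightarrow> (nat \<Rightarrow> nat \<Rightarrow> complex)" where
  "mat_mult d A B = (\<lambda>i k. \<Sum>j<d. A i j * B j k)"

definition observable :: "nat \<Rightarrow> (nat \<Rightarrow> nat \<Rightarrow> complex) \<Rightarrow> bool" where
  "observable d M \<longleftrightarrow> hermitian_mat d M \<and>
     (\<forall>ev. is_eigenvalue d M ev \<longrightarrow> ev \<in> \<real> \<and> -1 \<le> Re ev \<and> Re ev \<le> 1)"

definition Cor :: "(real^'n^'n) set" where
  "Cor = {C. (\<forall>x y. -1 \<le> C $ x $ y \<and> C $ x $ y \<le> 1) \<and>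
     (\<exists>(d::nat) (M :: 'n \<Rightarrow> nat \<Rightarrow> nat \<Rightarrow> complex) (N :: 'n \<Rightarrow> nat \<Rightarrow> nat \<Rightarrow> complex)
        (\<rho> :: nat \<Rightarrow> nat \<Rightarrow> complex).
        d \<ge> 1 \<and> (\<forall>x. observable d (M x)) \<and> (\<forall>y. observable d (N y)) \<and>
        psd_mat (d*d) \<rho> \<and> trace_mat (d*d) \<rho> = 1 \<and>
        (\<forall>x y. complex_of_real (C $ x $ y) = trace_mat (d*d) (mat_mult (d*d) (kron d (M x) (N y)) \<rho>)))}"

end

theory Submission
  imports Defs "Jordan_Normal_Form.Spectral_Radius" "HOL-Real_Asymp.Real_Asymp"
begin

text \<open>The elliptope lies in \<open>Cor(n,n)\<close>: a matrix of the elliptope is the Gram matrix of real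
  unit vectors \<open>g\<^sub>x\<close>, and this correlation is produced by the anticommuting (Jordan--Wigner)
  observables \<open>\<Sigma>\<^sub>k g\<^sub>x\<^sub>k \<Gamma>\<^sub>k\<close> measured on a maximally entangled state.
  Conversely, writing \<open>\<rho> = G G\<^sup>*\<close>, every \<open>C \<in> Cor(n,n)\<close> is \<open>c\<^sub>x\<^sub>y = \<langle>\<beta>\<^sub>y, \<alpha>\<^sub>x\<rangle>\<close> with
  \<open>\<alpha>\<^sub>x = (M\<^sub>x \<otimes> 1) G\<close> and \<open>\<beta>\<^sub>y = (1 \<otimes> N\<^sub>y) G\<close> in the unit ball, because observables are
  contractions. If \<open>c\<^sub>x\<^sub>x = 1\<close>, equality in Cauchy--Schwarz forces \<open>\<alpha>\<^sub>x = \<beta>\<^sub>x\<close>, so \<open>C\<close> is a Gram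
  matrix and lies in the elliptope. As the entries of \<open>Cor(n,n)\<close> are at most \<open>1\<close>, a segment of
  \<open>Cor(n,n)\<close> through a point with unit diagonal has unit diagonal at both ends; hence an extreme
  point of the elliptope admits no such segment in \<open>Cor(n,n)\<close>.\<close>

no_notation Matrix.vec_index (infixl "$" 100)

section \<open>Finite-dimensional complex inner products\<close>

definition cinner :: "'a set \<Rightarrow> ('a \<Rightarrow> complex) \<Rightarrow> ('a \<Rightarrow> complex) \<Rightarrow> complex" where
  "cinner I f g = (\<Sum>t\<in>I. cnj (f t) * g t)"

definition cnorm2 :: "'a set \<Rightarrow> ('a \<Rightarrow> complex) \<Rightarrow> real" where
  "cnorm2 I f = (\<Sum>t\<in>I. (cmod (f t))\<^sup>2)"

lemma cnj_mult_self: "cnj z * z = complex_of_real ((cmod z)\<^sup>2)"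
  by (metis complex_norm_square mult.commute of_real_power)

lemma cinner_self: "cinner I f f = complex_of_real (cnorm2 I f)"
  unfolding cinner_def cnorm2_def of_real_sum by (simp add: cnj_mult_self)

lemma cnorm2_nonneg: "0 \<le> cnorm2 I f"
  unfolding cnorm2_def by (simp add: sum_nonneg)

lemma cnj_cinner: "cnj (cinner I f g) = cinner I g f"
  unfolding cinner_def by (simp add: cnj_sum mult.commute)

lemma cinner_Cauchy_Schwarz: "(cmod (cinner I f g))\<^sup>2 \<le> cnorm2 I f * cnorm2 I g"
proof -
  have "cmod (cinner I f g) \<le> (\<Sum>t\<in>I. cmod (f t) * cmod (g t))"
    unfolding cinner_def by (rule order_trans[OF norm_sum]) (simp add: norm_mult)
  then have "(cmod (cinner I f g))\<^sup>2 \<le> (\<Sum>t\<in>I. cmod (f t) * cmod (g t))\<^sup>2"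
    by (simp add: power_mono)
  also have "\<dots> \<le> cnorm2 I f * cnorm2 I g"
    unfolding cnorm2_def by (rule Cauchy_Schwarz_ineq_sum)
  finally show ?thesis .
qed

text \<open>The equality case of Cauchy--Schwarz: \<open>\<parallel>f - g\<parallel>\<^sup>2 = \<parallel>f\<parallel>\<^sup>2 + \<parallel>g\<parallel>\<^sup>2 - 2 Re \<langle>g, f\<rangle> \<le> 0\<close>.\<close>
lemma cinner_eq_one_imp_eq:
  assumes "finite I" "cnorm2 I f \<le> 1" "cnorm2 I g \<le> 1" "cinner I g f = 1"
  shows "\<forall>t\<in>I. f t = g t"
proof -
  have diff: "(cmod (a - b))\<^sup>2 = (cmod a)\<^sup>2 + (cmod b)\<^sup>2 - 2 * Re (cnj b * a)" for a b
    unfolding cmod_power2 by (simp add: power2_eq_square algebra_simps)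
  have "cnorm2 I (\<lambda>t. f t - g t) = cnorm2 I f + cnorm2 I g - 2 * Re (cinner I g f)"
    unfolding cnorm2_def cinner_def diff
    by (simp add: sum.distrib sum_subtractf sum_distrib_left Re_sum)
  also have "\<dots> \<le> 0" using assms by simp
  finally have "cnorm2 I (\<lambda>t. f t - g t) = 0"
    using cnorm2_nonneg by (metis antisym)
  then show ?thesis
    using assms(1) unfolding cnorm2_def by (simp add: sum_nonneg_eq_0_iff)
qed

lemma cinner_sum_sum:
  fixes v :: "'x \<Rightarrow> real"
  shows "cinner I (\<lambda>t. \<Sum>y\<in>X. complex_of_real (v y) * \<alpha> y t) (\<lambda>t. \<Sum>x\<in>X. complex_of_real (v x) * \<alpha> x t)
       = (\<Sum>x\<in>X. \<Sum>y\<in>X. complex_of_real (v x * v y) * cinner I (\<alpha> y) (\<alpha> x))"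
proof -
  have "cinner I (\<lambda>t. \<Sum>y\<in>X. complex_of_real (v y) * \<alpha> y t) (\<lambda>t. \<Sum>x\<in>X. complex_of_real (v x) * \<alpha> x t)
      = (\<Sum>t\<in>I. \<Sum>x\<in>X. \<Sum>y\<in>X. complex_of_real (v x * v y) * (cnj (\<alpha> y t) * \<alpha> x t))"
    unfolding cinner_def by (simp add: cnj_sum sum_product mult_ac)
  also have "\<dots> = (\<Sum>x\<in>X. \<Sum>y\<in>X. \<Sum>t\<in>I. complex_of_real (v x * v y) * (cnj (\<alpha> y t) * \<alpha> x t))"
    by (subst sum.swap, rule sum.cong[OF refl], rule sum.swap)
  also have "\<dots> = (\<Sum>x\<in>X. \<Sum>y\<in>X. complex_of_real (v x * v y) * cinner I (\<alpha> y) (\<alpha> x))"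
    unfolding cinner_def by (simp add: sum_distrib_left)
  finally show ?thesis .
qed

section \<open>Observables are contractions\<close>

definition matvec :: "nat \<Rightarrow> (nat \<Rightarrow> nat \<Rightarrow> complex) \<Rightarrow> (nat \<Rightarrow> complex) \<Rightarrow> nat \<Rightarrow> complex" where
  "matvec d M u = (\<lambda>i. \<Sum>j<d. M i j * u j)"

definition to_mat :: "nat \<Rightarrow> (nat \<Rightarrow> nat \<Rightarrow> complex) \<Rightarrow> complex mat" where
  "to_mat d M = Matrix.mat d d (\<lambda>(i, j). M i j)"

lemma hermitian_cinner_matvec:
  assumes "hermitian_mat d M"
  shows "cinner {..<d} (matvec d M w) z = cinner {..<d} w (matvec d M z)"
proof -
  have cnj_M: "cnj (M i j) = M j i" if "i < d" "j < d" for i j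
    using assms that unfolding hermitian_mat_def by (metis complex_cnj_cnj)
  have "cinner {..<d} (matvec d M w) z = (\<Sum>i<d. \<Sum>j<d. cnj (w j) * (M j i * z i))"
    unfolding cinner_def matvec_def by (auto simp: sum_distrib_right cnj_M intro!: sum.cong)
  also have "\<dots> = (\<Sum>j<d. \<Sum>i<d. cnj (w j) * (M j i * z i))"
    by (rule sum.swap)
  also have "\<dots> = cinner {..<d} w (matvec d M z)"
    unfolding cinner_def matvec_def by (simp add: sum_distrib_left)
  finally show ?thesis .
qed

lemma hermitian_cinner_matvec_funpow:
  assumes "hermitian_mat d M"
  shows "cinner {..<d} ((matvec d M ^^ n) w) z = cinner {..<d} w ((matvec d M ^^ n) z)"
proof (induction n arbitrary: w z)
  case 0
  then show ?case by simp
next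
  case (Suc n)
  have "cinner {..<d} ((matvec d M ^^ Suc n) w) z = cinner {..<d} ((matvec d M ^^ n) (matvec d M w)) z"
    by (simp add: funpow_Suc_right del: funpow.simps)
  also have "\<dots> = cinner {..<d} (matvec d M w) ((matvec d M ^^ n) z)"
    by (rule Suc)
  also have "\<dots> = cinner {..<d} w ((matvec d M ^^ Suc n) z)"
    by (simp add: hermitian_cinner_matvec[OF assms])
  finally show ?case .
qed

lemma vec_matvec_funpow:
  "Matrix.vec d ((matvec d M ^^ k) w) = (to_mat d M ^\<^sub>m k) *\<^sub>v Matrix.vec d w"
proof (induction k arbitrary: w)
  case 0
  then show ?case by (simp add: to_mat_def)
next
  case (Suc k)
  have A: "to_mat d M \<in> carrier_mat d d"
    by (simp add: to_mat_def)
  have vec_matvec: "Matrix.vec d (matvec d M w) = to_mat d M *\<^sub>v Matrix.vec d w" for w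
    by (rule eq_vecI) (auto simp: to_mat_def matvec_def scalar_prod_def Matrix.row_def atLeast0LessThan)
  have "Matrix.vec d ((matvec d M ^^ Suc k) w) = (to_mat d M ^\<^sub>m k) *\<^sub>v (to_mat d M *\<^sub>v Matrix.vec d w)"
    by (simp add: funpow_Suc_right Suc vec_matvec del: funpow.simps)
  also have "\<dots> = (to_mat d M ^\<^sub>m k * to_mat d M) *\<^sub>v Matrix.vec d w"
    by (rule assoc_mult_mat_vec[symmetric, OF pow_carrier_mat[OF A] A]) simp
  finally show ?case by simp
qed

lemma spectral_radius_observable:
  assumes obs: "observable d M" and d: "d \<ge> 1"
  shows "spectral_radius (to_mat d M) \<le> 1"
proof -
  have A: "to_mat d M \<in> carrier_mat d d"
    by (simp add: to_mat_def)
  have "cmod ev \<le> 1" if ev: "ev \<in> spectrum (to_mat d M)" for ev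
  proof -
    obtain v where v: "v \<in> carrier_vec d" "v \<noteq> 0\<^sub>v d" "to_mat d M *\<^sub>v v = ev \<cdot>\<^sub>v v"
      using ev unfolding spectrum_def eigenvalue_def eigenvector_def by (auto simp: to_mat_def)
    have "\<exists>i<d. vec_index v i \<noteq> 0"
    proof (rule ccontr)
      assume "\<not> ?thesis"
      then have "v = 0\<^sub>v d"
        using v(1) by (intro eq_vecI) auto
      with v(2) show False by simp
    qed
    moreover have "(\<Sum>j<d. M i j * vec_index v j) = ev * vec_index v i" if "i < d" for i
      using arg_cong[OF v(3), of "\<lambda>w. vec_index w i"] that v(1)
      by (simp add: to_mat_def scalar_prod_def Matrix.row_def atLeast0LessThan)
    ultimately have "is_eigenvalue d M ev"
      unfolding is_eigenvalue_def by (intro exI[of _ "vec_index v"]) auto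
    with obs show ?thesis
      unfolding observable_def by (auto elim!: Reals_cases)
  qed
  moreover have "finite (spectrum (to_mat d M))"
    by (rule card_finite_spectrum(1)[OF A])
  moreover have "spectrum (to_mat d M) \<noteq> {}"
    using spectrum_non_empty[OF A] d by auto
  ultimately show ?thesis
    unfolding spectral_radius_def by (subst Max_le_iff) auto
qed

text \<open>The Jordan form only gives polynomial growth of the powers of a matrix of spectral radius
  at most \<open>1\<close>; Hermiticity is what upgrades this to contractivity below.\<close>
lemma observable_matvec_funpow_bound:
  assumes obs: "observable d M" and d: "d \<ge> 1"
  shows "\<exists>K \<ge> 0. \<forall>k \<ge> 1. cnorm2 {..<d} ((matvec d M ^^ k) u) \<le> K * real k ^ (2 * (d - 1))"
proof -
  define A where "A = to_mat d M"
  have A: "A \<in> carrier_mat d d"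
    by (simp add: A_def to_mat_def)
  have "char_poly A \<noteq> 0"
    using degree_monic_char_poly[OF A] by auto
  then have "order ev (char_poly A) \<le> d" for ev
    using order_degree[of "char_poly A" ev] degree_monic_char_poly[OF A] by simp
  moreover have "spectral_radius A \<le> 1"
    unfolding A_def by (rule spectral_radius_observable[OF obs d])
  ultimately obtain c1 c2 where "\<forall>k. norm_bound (A ^\<^sub>m k) (c1 + c2 * real k ^ (d - 1))"
    using spectral_radius_poly_bound[OF A] by blast
  then have bound: "cmod ((A ^\<^sub>m k) $$ (i, j)) \<le> c1 + c2 * real k ^ (d - 1)" if "i < d" "j < d" for k i j
    using that pow_carrier_mat[OF A] unfolding norm_bound_def by (metis carrier_matD)
  define c where "c = \<bar>c1\<bar> + \<bar>c2\<bar>"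
  define S where "S = (\<Sum>j<d. cmod (u j))"
  have entry: "cmod ((matvec d M ^^ k) u i) \<le> c * real k ^ (d - 1) * S"
    if k: "k \<ge> 1" and i: "i < d" for k i
  proof -
    have "(matvec d M ^^ k) u i = vec_index ((A ^\<^sub>m k) *\<^sub>v Matrix.vec d u) i"
      using i by (simp flip: vec_matvec_funpow add: A_def)
    also have "\<dots> = (\<Sum>j<d. (A ^\<^sub>m k) $$ (i, j) * u j)"
      using i carrier_matD[OF pow_carrier_mat[OF A, of k]]
      by (auto simp: scalar_prod_def Matrix.row_def atLeast0LessThan intro!: sum.cong)
    finally have "cmod ((matvec d M ^^ k) u i) \<le> (\<Sum>j<d. cmod ((A ^\<^sub>m k) $$ (i, j)) * cmod (u j))"
      by (metis (no_types, lifting) norm_mult norm_sum sum.cong)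
    also have "\<dots> \<le> (\<Sum>j<d. c * real k ^ (d - 1) * cmod (u j))"
    proof (intro sum_mono mult_right_mono)
      fix j assume "j \<in> {..<d}"
      have x: "1 \<le> real k ^ (d - 1)"
        using k by simp
      have "c2 * real k ^ (d - 1) \<le> \<bar>c2\<bar> * real k ^ (d - 1)"
        using x by (intro mult_right_mono) auto
      moreover have "\<bar>c1\<bar> \<le> \<bar>c1\<bar> * real k ^ (d - 1)"
        using x by (simp add: mult_le_cancel_left1)
      moreover have "cmod ((A ^\<^sub>m k) $$ (i, j)) \<le> c1 + c2 * real k ^ (d - 1)"
        using bound[OF i] \<open>j \<in> {..<d}\<close> by simp
      ultimately show "cmod ((A ^\<^sub>m k) $$ (i, j)) \<le> c * real k ^ (d - 1)"
        unfolding c_def distrib_right using abs_ge_self[of c1] by linarith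
    qed simp
    finally show ?thesis
      by (simp add: S_def sum_distrib_left)
  qed
  show ?thesis
  proof (intro exI conjI allI impI)
    fix k :: nat assume k: "k \<ge> 1"
    have "cnorm2 {..<d} ((matvec d M ^^ k) u) \<le> (\<Sum>i<d. (c * real k ^ (d - 1) * S)\<^sup>2)"
      unfolding cnorm2_def by (intro sum_mono power_mono entry k) auto
    also have "\<dots> = real d * (c * S)\<^sup>2 * (real k ^ (d - 1))\<^sup>2"
      by (simp add: power_mult_distrib)
    also have "\<dots> = real d * (c * S)\<^sup>2 * real k ^ (2 * (d - 1))"
      by (simp add: power_mult[symmetric] mult.commute)
    finally show "cnorm2 {..<d} ((matvec d M ^^ k) u) \<le> real d * (c * S)\<^sup>2 * real k ^ (2 * (d - 1))" .
  qed simp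
qed

lemma powers_of_two_exceed_polynomial:
  fixes q K :: real
  assumes q: "q > 1"
  shows "\<exists>j. K * real (2 ^ j) ^ m < q ^ 2 ^ j"
proof -
  have "((\<lambda>x. x ^ m / q powr x) \<longlongrightarrow> 0) at_top"
    using q by real_asymp
  then have "eventually (\<lambda>x. x ^ m / q powr x < 1 / (\<bar>K\<bar> + 1)) at_top"
    by (rule order_tendstoD(2)) simp
  then obtain x0 where x0: "\<And>x. x \<ge> x0 \<Longrightarrow> x ^ m / q powr x < 1 / (\<bar>K\<bar> + 1)"
    by (auto simp: eventually_at_top_linorder)
  define j where "j = nat \<lceil>x0\<rceil>"
  define N where "N = real ((2::nat) ^ j)"
  have "x0 \<le> real j"
    unfolding j_def by linarith
  also have "real j \<le> N"
    unfolding N_def by (simp add: less_imp_le)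
  finally have "N ^ m / q powr N < 1 / (\<bar>K\<bar> + 1)"
    by (rule x0)
  moreover have "q powr N = q ^ 2 ^ j"
    unfolding N_def by (rule powr_realpow) (use q in simp)
  ultimately have "N ^ m * (\<bar>K\<bar> + 1) < q ^ 2 ^ j"
    using q by (simp add: field_simps)
  moreover have "K * N ^ m \<le> N ^ m * (\<bar>K\<bar> + 1)"
    unfolding N_def by (smt (verit, best) mult.commute mult_right_mono zero_le_power of_nat_0_le_iff)
  ultimately have "K * N ^ m < q ^ 2 ^ j"
    by linarith
  then show ?thesis
    unfolding N_def by blast
qed

lemma power_two_iterate_bound:
  fixes a :: "nat \<Rightarrow> real"
  assumes nonneg: "\<And>n. 0 \<le> a n" and sq: "\<And>n. (a n)\<^sup>2 \<le> a 0 * a (2 * n)"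
  shows "a 1 ^ 2 ^ j \<le> a (2 ^ j) * a 0 ^ (2 ^ j - 1)"
proof (induction j)
  case 0
  then show ?case by simp
next
  case (Suc j)
  have exp: "2 ^ Suc j - 1 = Suc (2 * (2 ^ j - 1))"
    using one_le_power[of "2::nat" j] unfolding power_Suc by linarith
  have "a 1 ^ 2 ^ Suc j = (a 1 ^ 2 ^ j)\<^sup>2"
    by (simp add: power_mult[symmetric] mult.commute)
  also have "\<dots> \<le> (a (2 ^ j) * a 0 ^ (2 ^ j - 1))\<^sup>2"
    by (rule power_mono[OF Suc]) (simp add: nonneg)
  also have "\<dots> = (a (2 ^ j))\<^sup>2 * a 0 ^ (2 * (2 ^ j - 1))"
    by (simp add: power_mult_distrib power_mult[symmetric] mult.commute)
  also have "\<dots> \<le> (a 0 * a (2 * 2 ^ j)) * a 0 ^ (2 * (2 ^ j - 1))"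
    by (rule mult_right_mono[OF sq]) (simp add: nonneg)
  also have "\<dots> = a (2 ^ Suc j) * a 0 ^ (2 ^ Suc j - 1)"
    unfolding exp by simp
  finally show ?case .
qed

lemma hermitian_iterate_cnorm2_sq:
  assumes "hermitian_mat d M"
  shows "(cnorm2 {..<d} ((matvec d M ^^ n) u))\<^sup>2
    \<le> cnorm2 {..<d} u * cnorm2 {..<d} ((matvec d M ^^ (2 * n)) u)"
proof -
  let ?f = "matvec d M"
  have "complex_of_real (cnorm2 {..<d} ((?f ^^ n) u)) = cinner {..<d} u ((?f ^^ n) ((?f ^^ n) u))"
    by (simp add: cinner_self[symmetric] hermitian_cinner_matvec_funpow[OF assms])
  also have "\<dots> = cinner {..<d} u ((?f ^^ (2 * n)) u)"
    by (simp add: funpow_add mult_2)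
  finally have "cnorm2 {..<d} ((?f ^^ n) u) = cmod (cinner {..<d} u ((?f ^^ (2 * n)) u))"
    using cnorm2_nonneg by (metis norm_of_real abs_of_nonneg)
  then show ?thesis
    using cinner_Cauchy_Schwarz by metis
qed

text \<open>If \<open>\<parallel>M u\<parallel> > \<parallel>u\<parallel>\<close>, the previous lemma makes \<open>\<parallel>M\<^sup>k u\<parallel>\<^sup>2\<close> grow exponentially along
  \<open>k = 2\<^sup>j\<close>, contradicting the polynomial bound.\<close>
lemma observable_contraction:
  assumes obs: "observable d M"
  shows "cnorm2 {..<d} (matvec d M u) \<le> cnorm2 {..<d} u"
proof (cases "d = 0")
  case True
  then show ?thesis by (simp add: cnorm2_def)
next
  case False
  then have d: "d \<ge> 1" by simp
  define a where "a n = cnorm2 {..<d} ((matvec d M ^^ n) u)" for n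
  have nonneg: "0 \<le> a n" for n
    unfolding a_def by (rule cnorm2_nonneg)
  have sq: "(a n)\<^sup>2 \<le> a 0 * a (2 * n)" for n
    using hermitian_iterate_cnorm2_sq obs unfolding a_def observable_def by simp
  show ?thesis
  proof (rule ccontr)
    assume "\<not> ?thesis"
    then have grow: "a 0 < a 1"
      by (simp add: a_def)
    have "0 < a 0"
    proof (rule ccontr)
      assume "\<not> 0 < a 0"
      then have "\<forall>i<d. u i = 0"
        using nonneg[of 0] unfolding a_def cnorm2_def by (simp add: sum_nonneg_eq_0_iff)
      then have "a 1 = 0"
        by (simp add: a_def cnorm2_def matvec_def)
      with grow nonneg[of 0] show False by simp
    qed
    obtain K where K: "\<And>k. k \<ge> 1 \<Longrightarrow> a k \<le> K * real k ^ (2 * (d - 1))"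
      using observable_matvec_funpow_bound[OF obs d, of u] unfolding a_def by blast
    define q where "q = a 1 / a 0"
    have "q > 1"
      using grow \<open>0 < a 0\<close> by (simp add: q_def)
    then obtain j where j: "K / a 0 * real (2 ^ j) ^ (2 * (d - 1)) < q ^ 2 ^ j"
      using powers_of_two_exceed_polynomial by blast
    have "q ^ 2 ^ j \<le> a (2 ^ j) * a 0 ^ (2 ^ j - 1) / a 0 ^ 2 ^ j"
      unfolding q_def power_divide
      by (rule divide_right_mono[OF power_two_iterate_bound[OF nonneg sq]]) (simp add: nonneg)
    also have "\<dots> = a (2 ^ j) / a 0"
      using \<open>0 < a 0\<close> power_Suc[of "a 0" "2 ^ j - 1"] by simp
    also have "\<dots> \<le> K / a 0 * real (2 ^ j) ^ (2 * (d - 1))"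
      using K[of "2 ^ j"] \<open>0 < a 0\<close> by (simp add: divide_right_mono)
    finally show False
      using j by simp
  qed
qed

section \<open>Gram factorization of positive semidefinite forms\<close>

definition qform :: "'a set \<Rightarrow> ('a \<Rightarrow> 'a \<Rightarrow> complex) \<Rightarrow> ('a \<Rightarrow> complex) \<Rightarrow> ('a \<Rightarrow> complex) \<Rightarrow> complex" where
  "qform S R u w = (\<Sum>i\<in>S. \<Sum>j\<in>S. cnj (u i) * R i j * w j)"

definition unit_fun :: "'a \<Rightarrow> 'a \<Rightarrow> complex" where
  "unit_fun a = (\<lambda>i. if i = a then 1 else 0)"

lemma qform_add_left: "qform S R (\<lambda>i. u i + w i) z = qform S R u z + qform S R w z"
  unfolding qform_def by (simp add: distrib_right sum.distrib)

lemma qform_add_right: "qform S R z (\<lambda>i. u i + w i) = qform S R z u + qform S R z w"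
  unfolding qform_def by (simp add: distrib_left sum.distrib)

lemma qform_scale_left: "qform S R (\<lambda>i. c * u i) z = cnj c * qform S R u z"
  unfolding qform_def by (simp add: sum_distrib_left mult.assoc)

lemma qform_scale_right: "qform S R u (\<lambda>i. c * w i) = c * qform S R u w"
  unfolding qform_def by (simp add: sum_distrib_left mult.assoc mult.left_commute)

lemma qform_unit_left:
  assumes "finite S" "a \<in> S"
  shows "qform S R (unit_fun a) w = (\<Sum>j\<in>S. R a j * w j)"
proof -
  have "qform S R (unit_fun a) w = (\<Sum>i\<in>S. if i = a then (\<Sum>j\<in>S. R i j * w j) else 0)"
    unfolding qform_def unit_fun_def by (intro sum.cong) auto
  then show ?thesis
    using assms by simp
qed

lemma qform_unit_right:
  assumes "finite S" "b \<in> S"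
  shows "qform S R u (unit_fun b) = (\<Sum>i\<in>S. cnj (u i) * R i b)"
proof -
  have "qform S R u (unit_fun b) = (\<Sum>i\<in>S. \<Sum>j\<in>S. if j = b then cnj (u i) * R i j else 0)"
    unfolding qform_def unit_fun_def by (intro sum.cong) auto
  then show ?thesis
    using assms by simp
qed

lemma qform_unit_unit:
  assumes "finite S" "a \<in> S" "b \<in> S"
  shows "qform S R (unit_fun a) (unit_fun b) = R a b"
proof -
  have "(\<Sum>j\<in>S. R a j * unit_fun b j) = (\<Sum>j\<in>S. if j = b then R a j else 0)"
    unfolding unit_fun_def by (intro sum.cong) auto
  then show ?thesis
    using assms by (simp add: qform_unit_left)
qed

lemma qform_restrict:
  assumes "finite S" "a \<notin> S"
  shows "qform S R v v = qform (insert a S) R (v(a := 0)) (v(a := 0))"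
proof -
  have "qform S R v v = qform S R (v(a := 0)) (v(a := 0))"
    unfolding qform_def using assms(2) by (intro sum.cong refl) auto
  also have "\<dots> = qform (insert a S) R (v(a := 0)) (v(a := 0))"
    using assms unfolding qform_def by (simp add: sum.insert)
  finally show ?thesis .
qed

lemma psd_diagonal_zero_imp_row_zero:
  assumes fin: "finite T" and herm: "\<And>i j. i \<in> T \<Longrightarrow> j \<in> T \<Longrightarrow> R i j = cnj (R j i)"
    and psd: "\<And>v. 0 \<le> Re (qform T R v v)"
    and a: "a \<in> T" and j: "j \<in> T" and zero: "R a a = 0"
  shows "R a j = 0"
proof (rule ccontr)
  assume nz: "R a j \<noteq> 0"
  define t :: real where "t = (\<bar>Re (R j j)\<bar> + 1) / (2 * (cmod (R a j))\<^sup>2)"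
  define s where "s = - (complex_of_real t * R a j)"
  define v where "v i = s * unit_fun a i + unit_fun j i" for i
  have "qform T R v v = cnj s * s * R a a + cnj s * R a j + s * R j a + R j j"
    unfolding v_def using fin a j
    by (simp add: qform_add_left qform_add_right qform_scale_left qform_scale_right qform_unit_unit
        algebra_simps)
  also have "\<dots> = cnj s * R a j + s * cnj (R a j) + R j j"
    using zero herm[OF j a] by simp
  finally have form: "qform T R v v = cnj s * R a j + s * cnj (R a j) + R j j" .
  have "Re (cnj s * R a j + s * cnj (R a j)) = - 2 * t * (cmod (R a j))\<^sup>2"
    unfolding s_def cmod_power2 by (simp add: algebra_simps power2_eq_square)
  also have "\<dots> = - (\<bar>Re (R j j)\<bar> + 1)"
    unfolding t_def using nz by (simp add: field_simps)
  finally have "Re (qform T R v v) = - (\<bar>Re (R j j)\<bar> + 1) + Re (R j j)"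
    unfolding form by simp
  then show False
    using psd[of v] abs_ge_self[of "Re (R j j)"] by linarith
qed

text \<open>The Schur complement of a positive pivot: for \<open>t = -\<beta>/R a a\<close> with
  \<open>\<beta> = \<Sum>\<^sub>j R a j w j\<close>, the form of the complement at \<open>w\<close> is the form of \<open>R\<close> at \<open>w + t e\<^sub>a\<close>.\<close>
lemma psd_schur_complement:
  assumes fin: "finite T" and a: "a \<in> T"
    and herm: "\<And>i j. i \<in> T \<Longrightarrow> j \<in> T \<Longrightarrow> R i j = cnj (R j i)"
    and psd: "\<And>v. 0 \<le> Re (qform T R v v)" and pos: "0 < Re (R a a)"
  shows "0 \<le> Re (qform T (\<lambda>i j. R i j - R i a * R a j / R a a) w w)"
proof -
  define r where "r = Re (R a a)"
  have Raa: "R a a = complex_of_real r"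
    using herm[OF a a] unfolding r_def by (metis Reals_cnj_iff complex_is_Real_iff of_real_Re)
  define \<beta> where "\<beta> = (\<Sum>j\<in>T. R a j * w j)"
  have left: "qform T R (unit_fun a) w = \<beta>"
    unfolding \<beta>_def by (rule qform_unit_left[OF fin a])
  have right: "qform T R w (unit_fun a) = cnj \<beta>"
    unfolding qform_unit_right[OF fin a] \<beta>_def cnj_sum
    using herm[OF _ a] by (intro sum.cong) (auto simp: mult.commute)
  have "qform T (\<lambda>i j. R i j - R i a * R a j / R a a) w w
      = qform T R w w - (\<Sum>i\<in>T. \<Sum>j\<in>T. cnj (w i) * R i a * (R a j * w j)) / R a a"
    unfolding qform_def by (simp add: algebra_simps sum_subtractf sum_divide_distrib)
  also have "(\<Sum>i\<in>T. \<Sum>j\<in>T. cnj (w i) * R i a * (R a j * w j)) = qform T R w (unit_fun a) * \<beta>"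
    unfolding qform_unit_right[OF fin a] \<beta>_def by (simp add: sum_product)
  finally have complement: "qform T (\<lambda>i j. R i j - R i a * R a j / R a a) w w
      = qform T R w w - cnj \<beta> * \<beta> / complex_of_real r"
    unfolding Raa right .
  define t where "t = - \<beta> / complex_of_real r"
  have "qform T R (\<lambda>i. w i + t * unit_fun a i) (\<lambda>i. w i + t * unit_fun a i)
      = qform T R w w + t * cnj \<beta> + cnj t * \<beta> + cnj t * t * complex_of_real r"
    using fin a Raa
    by (simp add: qform_add_left qform_add_right qform_scale_left qform_scale_right qform_unit_unit
        left right algebra_simps)
  also have "\<dots> = qform T R w w - cnj \<beta> * \<beta> / complex_of_real r"
    unfolding t_def using pos by (simp add: r_def field_simps power2_eq_square)
  finally show ?thesis
    using psd complement by metis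
qed

lemma psd_rank_one_split:
  assumes fin: "finite S" and aS: "a \<notin> S"
    and herm: "\<And>i j. i \<in> insert a S \<Longrightarrow> j \<in> insert a S \<Longrightarrow> R i j = cnj (R j i)"
    and psd: "\<And>v. 0 \<le> Re (qform (insert a S) R v v)"
  obtains g where
    "\<And>i j. i \<in> insert a S \<Longrightarrow> j \<in> insert a S \<Longrightarrow> i = a \<or> j = a \<Longrightarrow> R i j = g i * cnj (g j)"
    "\<And>v. 0 \<le> Re (qform S (\<lambda>i j. R i j - g i * cnj (g j)) v v)"
proof -
  define T where "T = insert a S"
  have finT: "finite T" and a: "a \<in> T"
    using fin by (auto simp: T_def)
  have hermT: "\<And>i j. i \<in> T \<Longrightarrow> j \<in> T \<Longrightarrow> R i j = cnj (R j i)"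
    and psdT: "\<And>v. 0 \<le> Re (qform T R v v)"
    using herm psd unfolding T_def by blast+
  have Re_aa: "0 \<le> Re (R a a)"
    using psdT[of "unit_fun a"] qform_unit_unit[OF finT a a] by simp
  have Raa: "complex_of_real (Re (R a a)) = R a a"
    using hermT[OF a a] by (metis Reals_cnj_iff complex_is_Real_iff of_real_Re)
  show thesis
  proof (cases "Re (R a a) = 0")
    case True
    have row: "R a j = 0" if "j \<in> T" for j
      using psd_diagonal_zero_imp_row_zero[OF finT hermT psdT a that] True Raa by simp
    have rank_one: "R i j = 0 * cnj 0" if "i \<in> T" "j \<in> T" "i = a \<or> j = a" for i j
    proof (cases "i = a")
      case True
      then show ?thesis using row that(2) by simp
    next
      case False
      then have "j = a" using that(3) by simp
      then show ?thesis using row[OF that(1)] hermT[OF that(1,2)] by simp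
    qed
    have "0 \<le> Re (qform S (\<lambda>i j. R i j - 0 * cnj 0) v v)" for v
      using psdT[of "v(a := 0)"] unfolding T_def qform_restrict[OF fin aS, symmetric] by simp
    with rank_one show thesis
      by (intro that[of "\<lambda>_. 0"]) (simp_all add: T_def)
  next
    case False
    define c where "c = complex_of_real (sqrt (Re (R a a)))"
    define g where "g i = R i a / c" for i
    have c_sq: "c * c = R a a"
      unfolding c_def using Re_aa Raa by (simp flip: of_real_mult)
    have gg: "g i * cnj (g j) = R i a * R a j / R a a" if "j \<in> T" for i j
    proof -
      have "g i * cnj (g j) = R i a * cnj (R j a) / (c * c)"
        unfolding g_def c_def by simp
      then show ?thesis
        using hermT[OF a that] c_sq by simp
    qed
    have "R a a \<noteq> 0"
      using False by auto
    have rank_one: "R i j = g i * cnj (g j)" if "i \<in> T" "j \<in> T" "i = a \<or> j = a" for i j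
      using that(3) gg[OF that(2)] \<open>R a a \<noteq> 0\<close> by auto
    have "0 \<le> Re (qform S (\<lambda>i j. R i j - g i * cnj (g j)) v v)" for v
    proof -
      have "qform S (\<lambda>i j. R i j - g i * cnj (g j)) v v
          = qform S (\<lambda>i j. R i j - R i a * R a j / R a a) v v"
        unfolding qform_def using gg by (intro sum.cong refl) (simp add: T_def)
      also have "\<dots> = qform T (\<lambda>i j. R i j - R i a * R a j / R a a) (v(a := 0)) (v(a := 0))"
        unfolding T_def by (rule qform_restrict[OF fin aS])
      finally show ?thesis
        using psd_schur_complement[OF finT a hermT psdT] False Re_aa by simp
    qed
    with rank_one show thesis
      by (intro that[of g]) (simp_all add: T_def)
  qed
qed

lemma psd_gram_factorization:
  assumes "finite S"
    and "\<And>i j. i \<in> S \<Longrightarrow> j \<in> S \<Longrightarrow> R i j = cnj (R j i)"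
    and "\<And>v. 0 \<le> Re (qform S R v v)"
  shows "\<exists>G. \<forall>i\<in>S. \<forall>j\<in>S. R i j = (\<Sum>k\<in>S. G i k * cnj (G j k))"
  using assms
proof (induction S arbitrary: R rule: finite_induct)
  case empty
  then show ?case by simp
next
  case (insert a S R)
  obtain g where g: "\<And>i j. i \<in> insert a S \<Longrightarrow> j \<in> insert a S \<Longrightarrow> i = a \<or> j = a \<Longrightarrow> R i j = g i * cnj (g j)"
    and psd: "\<And>v. 0 \<le> Re (qform S (\<lambda>i j. R i j - g i * cnj (g j)) v v)"
    using psd_rank_one_split[OF insert.hyps insert.prems] by blast
  have "R i j - g i * cnj (g j) = cnj (R j i - g j * cnj (g i))" if "i \<in> S" "j \<in> S" for i j
    using insert.prems(1)[of i j] that by simp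
  then obtain G where G: "\<forall>i\<in>S. \<forall>j\<in>S. R i j - g i * cnj (g j) = (\<Sum>k\<in>S. G i k * cnj (G j k))"
    using insert.IH[of "\<lambda>i j. R i j - g i * cnj (g j)"] psd by blast
  define G' where "G' i k = (if k = a then g i else if i = a then 0 else G i k)" for i k
  have "R i j = (\<Sum>k\<in>insert a S. G' i k * cnj (G' j k))" if "i \<in> insert a S" "j \<in> insert a S" for i j
  proof -
    have split: "(\<Sum>k\<in>insert a S. G' i k * cnj (G' j k)) = g i * cnj (g j) + (\<Sum>k\<in>S. G' i k * cnj (G' j k))"
      using insert.hyps by (simp add: G'_def)
    show ?thesis
    proof (cases "i = a \<or> j = a")
      case True
      then have "(\<Sum>k\<in>S. G' i k * cnj (G' j k)) = 0"
        using insert.hyps by (intro sum.neutral) (auto simp: G'_def)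
      then show ?thesis
        using split g[OF that True] by simp
    next
      case False
      then have "(\<Sum>k\<in>S. G' i k * cnj (G' j k)) = (\<Sum>k\<in>S. G i k * cnj (G j k))"
        using insert.hyps by (intro sum.cong) (auto simp: G'_def)
      with False that G show ?thesis
        using split by (metis diff_add_cancel add.commute insertE)
    qed
  qed
  then show ?case by blast
qed

section \<open>Correlation matrices with unit diagonal\<close>

lemma sum_lessThan_square:
  fixes d :: nat
  shows "(\<Sum>p<d * d. f p) = (\<Sum>a<d. \<Sum>b<d. f (a * d + b))"
proof -
  have lt: "a * d + b < d * d" if "a < d" "b < d" for a b
  proof -
    have "a * d + b < (a + 1) * d"
      using that by simp
    also have "\<dots> \<le> d * d"
      using that by (intro mult_le_mono1) simp
    finally show ?thesis .
  qed
  have "(\<Sum>a<d. \<Sum>b<d. f (a * d + b)) = (\<Sum>(a, b)\<in>{..<d} \<times> {..<d}. f (a * d + b))"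
    by (simp add: sum.cartesian_product)
  also have "\<dots> = (\<Sum>p<d * d. f p)"
    by (rule sum.reindex_bij_witness[where i = "\<lambda>p. (p div d, p mod d)" and j = "\<lambda>(a, b). a * d + b"])
      (auto simp: lt less_mult_imp_div_less, metis mod_less_divisor mult_0_right neq0_conv not_less_zero)
  finally show ?thesis by simp
qed

text \<open>The form of \<open>A \<otimes> B\<close> at \<open>u\<close> is \<open>\<langle>(1 \<otimes> B) u, (A \<otimes> 1) u\<rangle>\<close>.\<close>
lemma qform_kron:
  assumes "hermitian_mat d B"
  shows "qform {..<d * d} (kron d A B) u u
    = (\<Sum>a<d. \<Sum>b<d. cnj (\<Sum>b'<d. B b b' * u (a * d + b')) * (\<Sum>a'<d. A a a' * u (a' * d + b)))"
proof -
  have cnj_B: "cnj (B b b') = B b' b" if "b < d" "b' < d" for b b'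
    using assms that unfolding hermitian_mat_def by (metis complex_cnj_cnj)
  have "qform {..<d * d} (kron d A B) u u
      = (\<Sum>a<d. \<Sum>b<d. \<Sum>a'<d. \<Sum>b'<d. cnj (u (a * d + b)) * (A a a' * B b b') * u (a' * d + b'))"
    unfolding qform_def by (simp add: sum_lessThan_square kron_def)
  also have "\<dots> = (\<Sum>a<d. \<Sum>b<d. \<Sum>b'<d. \<Sum>a'<d. cnj (u (a * d + b)) * (A a a' * B b b') * u (a' * d + b'))"
    by (rule sum.cong[OF refl], rule sum.cong[OF refl], rule sum.swap)
  also have "\<dots> = (\<Sum>a<d. \<Sum>b'<d. \<Sum>b<d. \<Sum>a'<d. cnj (u (a * d + b)) * (A a a' * B b b') * u (a' * d + b'))"
    by (rule sum.cong[OF refl], rule sum.swap)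
  also have "\<dots> = (\<Sum>a<d. \<Sum>b<d. cnj (\<Sum>b'<d. B b b' * u (a * d + b')) * (\<Sum>a'<d. A a a' * u (a' * d + b)))"
  proof (intro sum.cong refl)
    fix a b assume "b \<in> {..<d}"
    then have "(\<Sum>b'<d. \<Sum>a'<d. cnj (u (a * d + b')) * (A a a' * B b' b) * u (a' * d + b))
      = (\<Sum>b'<d. \<Sum>a'<d. cnj (B b b' * u (a * d + b')) * (A a a' * u (a' * d + b)))"
      by (intro sum.cong refl) (simp add: cnj_B)
    also have "\<dots> = cnj (\<Sum>b'<d. B b b' * u (a * d + b')) * (\<Sum>a'<d. A a a' * u (a' * d + b))"
      by (simp add: cnj_sum sum_product)
    finally show "(\<Sum>b'<d. \<Sum>a'<d. cnj (u (a * d + b')) * (A a a' * B b' b) * u (a' * d + b))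
      = cnj (\<Sum>b'<d. B b b' * u (a * d + b')) * (\<Sum>a'<d. A a a' * u (a' * d + b))" .
  qed
  finally show ?thesis .
qed

lemma trace_kron_gram:
  assumes "hermitian_mat d B"
    and gram: "\<And>i j. i < d * d \<Longrightarrow> j < d * d \<Longrightarrow> \<rho> i j = (\<Sum>k<d * d. G i k * cnj (G j k))"
  shows "trace_mat (d * d) (mat_mult (d * d) (kron d A B) \<rho>)
    = (\<Sum>k<d * d. qform {..<d * d} (kron d A B) (\<lambda>p. G p k) (\<lambda>p. G p k))"
proof -
  have "trace_mat (d * d) (mat_mult (d * d) (kron d A B) \<rho>)
      = (\<Sum>p<d * d. \<Sum>q<d * d. \<Sum>k<d * d. cnj (G p k) * kron d A B p q * G q k)"
    unfolding trace_mat_def mat_mult_def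
    by (auto simp: gram sum_distrib_left mult_ac intro!: sum.cong)
  also have "\<dots> = (\<Sum>p<d * d. \<Sum>k<d * d. \<Sum>q<d * d. cnj (G p k) * kron d A B p q * G q k)"
    by (rule sum.cong[OF refl], rule sum.swap)
  also have "\<dots> = (\<Sum>k<d * d. qform {..<d * d} (kron d A B) (\<lambda>p. G p k) (\<lambda>p. G p k))"
    unfolding qform_def by (rule sum.swap)
  finally show ?thesis .
qed

lemma observable_contraction_slice:
  assumes "observable d A"
  shows "(\<Sum>a<d. (cmod (\<Sum>a'<d. A a a' * f a'))\<^sup>2) \<le> (\<Sum>a<d. (cmod (f a))\<^sup>2)"
  using observable_contraction[OF assms, of f] unfolding cnorm2_def matvec_def .

text \<open>The easy direction of Tsirelson's theorem.\<close>
lemma Cor_gram_representation: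
  fixes C :: "real^'n^'n"
  assumes "C \<in> Cor"
  obtains I :: "(nat \<times> nat \<times> nat) set" and \<alpha> \<beta> :: "'n \<Rightarrow> nat \<times> nat \<times> nat \<Rightarrow> complex"
  where "finite I" "\<And>x. cnorm2 I (\<alpha> x) \<le> 1" "\<And>y. cnorm2 I (\<beta> y) \<le> 1"
    "\<And>x y. complex_of_real (C $ x $ y) = cinner I (\<beta> y) (\<alpha> x)"
proof -
  obtain d M N \<rho> where "(\<forall>x. observable d (M x)) \<and> (\<forall>y. observable d (N y)) \<and>
      psd_mat (d * d) \<rho> \<and> trace_mat (d * d) \<rho> = 1 \<and>
      (\<forall>x y. complex_of_real (C $ x $ y) = trace_mat (d * d) (mat_mult (d * d) (kron d (M x) (N y)) \<rho>))"
    using assms unfolding Cor_def by blast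
  then have obsM: "\<And>x. observable d (M x)" and obsN: "\<And>y. observable d (N y)"
    and psd: "psd_mat (d * d) \<rho>" and tr: "trace_mat (d * d) \<rho> = 1"
    and C: "\<And>x y. complex_of_real (C $ x $ y) = trace_mat (d * d) (mat_mult (d * d) (kron d (M x) (N y)) \<rho>)"
    by blast+
  define D where "D = d * d"
  have "hermitian_mat D \<rho>"
    using psd unfolding psd_mat_def D_def by blast
  then have "\<rho> i j = cnj (\<rho> j i)" if "i \<in> {..<D}" "j \<in> {..<D}" for i j
    using that unfolding hermitian_mat_def by blast
  moreover have "0 \<le> Re (qform {..<D} \<rho> v v)" for v
    using psd unfolding psd_mat_def D_def qform_def Let_def by blast
  ultimately obtain G where G: "\<And>i j. i < D \<Longrightarrow> j < D \<Longrightarrow> \<rho> i j = (\<Sum>k<D. G i k * cnj (G j k))"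
    using psd_gram_factorization[of "{..<D}" \<rho>] by (metis finite_lessThan lessThan_iff)
  define I where "I = {..<D} \<times> {..<d} \<times> {..<d}"
  define \<alpha> where "\<alpha> x = (\<lambda>(k, a, b). \<Sum>a'<d. M x a a' * G (a' * d + b) k)" for x
  define \<beta> where "\<beta> y = (\<lambda>(k, a, b). \<Sum>b'<d. N y b b' * G (a * d + b') k)" for y
  have sum_I: "(\<Sum>t\<in>I. h t) = (\<Sum>k<D. \<Sum>a<d. \<Sum>b<d. h (k, a, b))" for h :: "_ \<Rightarrow> 'b::comm_monoid_add"
    unfolding I_def by (simp add: sum.cartesian_product)
  have G_norm: "(\<Sum>k<D. \<Sum>a<d. \<Sum>b<d. (cmod (G (a * d + b) k))\<^sup>2) = 1"
  proof -
    have "complex_of_real (\<Sum>k<D. \<Sum>p<D. (cmod (G p k))\<^sup>2) = (\<Sum>p<D. \<Sum>k<D. G p k * cnj (G p k))"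
      unfolding of_real_sum complex_norm_square by (rule sum.swap)
    also have "\<dots> = trace_mat D \<rho>"
      unfolding trace_mat_def by (intro sum.cong) (auto simp: G)
    finally have "complex_of_real (\<Sum>k<D. \<Sum>p<D. (cmod (G p k))\<^sup>2) = trace_mat D \<rho>" .
    then have "(\<Sum>k<D. \<Sum>p<D. (cmod (G p k))\<^sup>2) = 1"
      using tr unfolding D_def by (metis of_real_eq_1_iff)
    moreover have "(\<Sum>k<D. \<Sum>p<D. (cmod (G p k))\<^sup>2) = (\<Sum>k<D. \<Sum>a<d. \<Sum>b<d. (cmod (G (a * d + b) k))\<^sup>2)"
      unfolding D_def by (rule sum.cong[OF refl], rule sum_lessThan_square)
    ultimately show ?thesis
      by simp
  qed
  show thesis
  proof
    show "finite I"
      by (simp add: I_def)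
  next
    fix x
    have "cnorm2 I (\<alpha> x) = (\<Sum>k<D. \<Sum>b<d. \<Sum>a<d. (cmod (\<Sum>a'<d. M x a a' * G (a' * d + b) k))\<^sup>2)"
      unfolding cnorm2_def sum_I \<alpha>_def by (simp, rule sum.cong[OF refl], rule sum.swap)
    also have "\<dots> \<le> (\<Sum>k<D. \<Sum>b<d. \<Sum>a<d. (cmod (G (a * d + b) k))\<^sup>2)"
      by (rule sum_mono, rule sum_mono, rule observable_contraction_slice[OF obsM])
    also have "\<dots> = 1"
      unfolding G_norm[symmetric] by (rule sum.cong[OF refl], rule sum.swap)
    finally show "cnorm2 I (\<alpha> x) \<le> 1" .
  next
    fix y
    have "cnorm2 I (\<beta> y) = (\<Sum>k<D. \<Sum>a<d. \<Sum>b<d. (cmod (\<Sum>b'<d. N y b b' * G (a * d + b') k))\<^sup>2)"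
      unfolding cnorm2_def sum_I \<beta>_def by simp
    also have "\<dots> \<le> (\<Sum>k<D. \<Sum>a<d. \<Sum>b<d. (cmod (G (a * d + b) k))\<^sup>2)"
      by (rule sum_mono, rule sum_mono, rule observable_contraction_slice[OF obsN])
    finally show "cnorm2 I (\<beta> y) \<le> 1"
      using G_norm by simp
  next
    fix x y
    have herm: "hermitian_mat d (N y)"
      using obsN unfolding observable_def by simp
    have "trace_mat (d * d) (mat_mult (d * d) (kron d (M x) (N y)) \<rho>)
        = (\<Sum>k<D. qform {..<d * d} (kron d (M x) (N y)) (\<lambda>p. G p k) (\<lambda>p. G p k))"
      unfolding D_def by (rule trace_kron_gram[OF herm]) (use G in \<open>simp add: D_def\<close>)
    then show "complex_of_real (C $ x $ y) = cinner I (\<beta> y) (\<alpha> x)"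
      unfolding C qform_kron[OF herm] cinner_def sum_I by (simp add: \<alpha>_def \<beta>_def)
  qed
qed

lemma gram_in_elliptope:
  fixes C :: "real^'n^'n"
  assumes gram: "\<And>x y. complex_of_real (C $ x $ y) = cinner I (\<alpha> y) (\<alpha> x)"
    and diag: "\<And>x. C $ x $ x = 1"
  shows "C \<in> elliptope"
proof -
  have "transpose C = C"
  proof -
    have "complex_of_real (C $ j $ i) = cnj (complex_of_real (C $ i $ j))" for i j
      unfolding gram by (simp add: cnj_cinner)
    then have "C $ j $ i = C $ i $ j" for i j
      by (metis complex_cnj_complex_of_real of_real_eq_iff)
    then show ?thesis
      by (simp add: transpose_def Finite_Cartesian_Product.vec_eq_iff)
  qed
  moreover have "0 \<le> v \<bullet> (C *v v)" for v :: "real^'n"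
  proof -
    define \<gamma> where "\<gamma> t = (\<Sum>x\<in>UNIV. complex_of_real (v $ x) * \<alpha> x t)" for t
    have "complex_of_real (v \<bullet> (C *v v))
        = (\<Sum>x\<in>UNIV. \<Sum>y\<in>UNIV. complex_of_real (v $ x * v $ y) * cinner I (\<alpha> y) (\<alpha> x))"
      unfolding inner_vec_def matrix_vector_mult_def
      by (simp add: of_real_sum sum_distrib_left gram[symmetric] mult_ac)
    also have "\<dots> = complex_of_real (cnorm2 I \<gamma>)"
      unfolding \<gamma>_def cinner_sum_sum[symmetric] cinner_self ..
    finally show ?thesis
      using cnorm2_nonneg of_real_eq_iff by metis
  qed
  ultimately show ?thesis
    unfolding elliptope_def using diag by blast
qed

lemma Cor_unit_diagonal_in_elliptope:
  fixes C :: "real^'n^'n"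
  assumes "C \<in> Cor" and diag: "\<And>x. C $ x $ x = 1"
  shows "C \<in> elliptope"
proof -
  obtain I :: "(nat \<times> nat \<times> nat) set" and \<alpha> \<beta> where "finite I" "\<And>x. cnorm2 I (\<alpha> x) \<le> 1" "\<And>y. cnorm2 I (\<beta> y) \<le> 1"
    and C: "\<And>x y. complex_of_real (C $ x $ y) = cinner I (\<beta> y) (\<alpha> x)"
    using Cor_gram_representation[OF assms(1)] by blast
  moreover have "cinner I (\<beta> x) (\<alpha> x) = 1" for x
    using C[of x x] diag by simp
  ultimately have eq: "\<forall>t\<in>I. \<alpha> x t = \<beta> x t" for x
    by (intro cinner_eq_one_imp_eq)
  have "complex_of_real (C $ x $ y) = cinner I (\<alpha> y) (\<alpha> x)" for x y
    unfolding C cinner_def using eq[of y] by (intro sum.cong) auto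
  then show ?thesis
    using diag by (rule gram_in_elliptope)
qed

section \<open>Every elliptope matrix is a quantum correlation\<close>

text \<open>Jordan--Wigner: on \<open>m\<close> qubits, indexed by the bits of \<open>i < 2\<^sup>m\<close>, the generator \<open>\<Gamma>\<^sub>k\<close>
  flips bit \<open>k\<close> with the sign \<open>(-1)\<close> to the number of set bits below \<open>k\<close>. These generators are
  real symmetric, square to \<open>1\<close> and pairwise anticommute, so \<open>\<Sigma>\<^sub>k g\<^sub>k \<Gamma>\<^sub>k\<close> squares to
  \<open>|g|\<^sup>2\<close>.\<close>

lemma flip_bit_flip_bit: "flip_bit k (flip_bit k (i::nat)) = i"
  by (rule bit_eqI) (auto simp: bit_flip_bit_iff)

lemma flip_bit_commute: "flip_bit k (flip_bit l (i::nat)) = flip_bit l (flip_bit k i)"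
  by (rule bit_eqI) (auto simp: bit_flip_bit_iff)

lemma flip_bit_neq: assumes "k \<noteq> l" shows "flip_bit k (i::nat) \<noteq> flip_bit l i"
proof
  assume eq: "flip_bit k i = flip_bit l i"
  have "bit (flip_bit k i) k = bit (flip_bit l i) k" by (simp only: eq)
  then show False using assms by (simp add: bit_flip_bit_iff)
qed

lemma flip_bit_less_power: assumes "(i::nat) < 2 ^ m" "k < m" shows "flip_bit k i < 2 ^ m"
proof -
  have "take_bit m i = i" using assms by (simp add: take_bit_nat_eq_self_iff)
  then have "take_bit m (flip_bit k i) = flip_bit k i"
    using assms by (simp add: take_bit_flip_bit_eq)
  then show ?thesis by (simp add: take_bit_nat_eq_self_iff)
qed

definition jw_sign :: "nat \<Rightarrow> nat \<Rightarrow> complex" where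
  "jw_sign k i = (-1) ^ card {t. t < k \<and> bit i t}"

lemma jw_sign_square: "jw_sign k i * jw_sign k i = 1"
proof -
  have "(-1::complex) ^ c * (-1) ^ c = ((-1) * (-1)) ^ c" for c :: nat
    by (rule power_mult_distrib[symmetric])
  then show ?thesis unfolding jw_sign_def by simp
qed

lemma jw_sign_flip_bit_ge: "k \<le> l \<Longrightarrow> jw_sign k (flip_bit l i) = jw_sign k i"
proof -
  assume "k \<le> l"
  then have "{t. t < k \<and> bit (flip_bit l i) t} = {t. t < k \<and> bit i t}"
    by (auto simp: bit_flip_bit_iff)
  then show ?thesis unfolding jw_sign_def by simp
qed

lemma jw_sign_flip_bit_less: assumes "k < l" shows "jw_sign l (flip_bit k i) = - jw_sign l i"
proof -
  define A where "A = {t. t < l \<and> bit i t}"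
  define A' where "A' = {t. t < l \<and> bit (flip_bit k i) t}"
  have finA: "finite A" unfolding A_def by simp
  have sgi: "jw_sign l i = (-1) ^ card A" unfolding jw_sign_def A_def by simp
  have sgf: "jw_sign l (flip_bit k i) = (-1) ^ card A'" unfolding jw_sign_def A'_def by simp
  show ?thesis
  proof (cases "bit i k")
    case True
    have e: "A' = A - {k}" unfolding A'_def A_def using assms True
      by (auto simp add: bit_flip_bit_iff)
    have kA: "k \<in> A" using True assms by (simp add: A_def)
    then have "card A \<noteq> 0" using finA by auto
    then obtain c0 where c0: "card A = Suc c0" using not0_implies_Suc by blast
    have "card A' = c0" unfolding e using card_Diff_singleton[OF kA] c0 by simp
    then show ?thesis unfolding sgi sgf c0 by simp
  next
    case False
    have e: "A' = insert k A" unfolding A'_def A_def using assms False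
      by (auto simp add: bit_flip_bit_iff)
    have kA: "k \<notin> A" using False by (simp add: A_def)
    have "card A' = Suc (card A)" unfolding e using finA kA by simp
    then show ?thesis unfolding sgi sgf by simp
  qed
qed

definition jw_gen :: "nat \<Rightarrow> nat \<Rightarrow> nat \<Rightarrow> complex" where
  "jw_gen k i j = (if j = flip_bit k i then jw_sign k i else 0)"

lemma jw_gen_sym: "jw_gen k i j = jw_gen k j i"
proof (cases "j = flip_bit k i")
  case True
  then have "i = flip_bit k j" by (simp add: flip_bit_flip_bit)
  moreover have "jw_sign k j = jw_sign k i" using True jw_sign_flip_bit_ge[of k k i] by simp
  ultimately show ?thesis using True unfolding jw_gen_def by simp
next
  case False
  then have "i \<noteq> flip_bit k j" using flip_bit_flip_bit by metis
  then show ?thesis using False unfolding jw_gen_def by simp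
qed

lemma sum_jw_gen_right:
  assumes "i < 2 ^ m" "k < m"
  shows "(\<Sum>j<2 ^ m. jw_gen k i j * f j) = jw_sign k i * f (flip_bit k i)"
proof -
  have "(\<Sum>j<2 ^ m. jw_gen k i j * f j) = (\<Sum>j<2 ^ m. if j = flip_bit k i then jw_sign k i * f j else 0)"
    unfolding jw_gen_def by (intro sum.cong) auto
  also have "\<dots> = jw_sign k i * f (flip_bit k i)" using flip_bit_less_power[OF assms] by simp
  finally show ?thesis .
qed

lemma cnj_jw_sign: "cnj (jw_sign k i) = jw_sign k i"
  unfolding jw_sign_def by simp

lemma cnj_jw_gen: "cnj (jw_gen k i j) = jw_gen k i j"
  unfolding jw_gen_def by (simp add: cnj_jw_sign)

definition jw_obs :: "nat \<Rightarrow> (nat \<Rightarrow> real) \<Rightarrow> nat \<Rightarrow> nat \<Rightarrow> complex" where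
  "jw_obs m g i j = (\<Sum>k<m. complex_of_real (g k) * jw_gen k i j)"

lemma hermitian_jw_obs: "hermitian_mat d (jw_obs m g)"
  unfolding hermitian_mat_def jw_obs_def by (simp add: cnj_sum cnj_jw_gen jw_gen_sym)

lemma jw_gen_anticommute:
  assumes "k \<noteq> k'"
  shows "jw_sign k i * jw_gen k' (flip_bit k i) l + jw_sign k' i * jw_gen k (flip_bit k' i) l = 0"
proof (cases "l = flip_bit k' (flip_bit k i)")
  case False
  then have "l \<noteq> flip_bit k (flip_bit k' i)" by (simp add: flip_bit_commute)
  with False show ?thesis unfolding jw_gen_def by simp
next
  case True
  then have T2: "l = flip_bit k (flip_bit k' i)" by (simp add: flip_bit_commute)
  have "jw_sign k i * jw_sign k' (flip_bit k i) + jw_sign k' i * jw_sign k (flip_bit k' i) = 0"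
  proof (cases "k < k'")
    case True
    then show ?thesis by (simp add: jw_sign_flip_bit_less jw_sign_flip_bit_ge)
  next
    case False
    then have "k' < k" using assms by simp
    then show ?thesis by (simp add: jw_sign_flip_bit_less jw_sign_flip_bit_ge)
  qed
  then show ?thesis unfolding jw_gen_def using True T2 by simp
qed

lemma sum_sum_antisymmetric:
  fixes T :: "nat \<Rightarrow> nat \<Rightarrow> complex"
  assumes "\<And>k k'. k < m \<Longrightarrow> k' < m \<Longrightarrow> k \<noteq> k' \<Longrightarrow> T k k' + T k' k = 0"
  shows "(\<Sum>k<m. \<Sum>k'<m. T k k') = (\<Sum>k<m. T k k)"
proof -
  have "2 * (\<Sum>k<m. \<Sum>k'<m. T k k') = (\<Sum>k<m. \<Sum>k'<m. T k k') + (\<Sum>k'<m. \<Sum>k<m. T k k')"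
    by (simp add: sum.swap[of T "{..<m}" "{..<m}"])
  also have "\<dots> = (\<Sum>k<m. \<Sum>k'<m. T k k' + T k' k)"
  proof -
    have "(\<Sum>k'<m. \<Sum>k<m. T k k') = (\<Sum>k<m. \<Sum>k'<m. T k' k)" by simp
    then show ?thesis by (simp add: sum.distrib)
  qed
  also have "\<dots> = (\<Sum>k<m. \<Sum>k'<m. if k' = k then 2 * T k k else 0)"
    using assms by (intro sum.cong refl) auto
  also have "\<dots> = 2 * (\<Sum>k<m. T k k)" by (simp add: sum_distrib_left)
  finally show ?thesis by simp
qed

lemma jw_obs_square:
  assumes i: "i < 2 ^ m" and l: "l < 2 ^ m" and unit: "(\<Sum>k<m. (g k)^2) = 1"
  shows "(\<Sum>j<2 ^ m. jw_obs m g i j * jw_obs m g j l) = (if l = i then 1 else 0)"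
proof -
  define T where "T k k' = complex_of_real (g k * g k') * (jw_sign k i * jw_gen k' (flip_bit k i) l)" for k k'
  have "(\<Sum>j<2 ^ m. jw_obs m g i j * jw_obs m g j l)
      = (\<Sum>j<2 ^ m. \<Sum>k<m. \<Sum>k'<m. complex_of_real (g k * g k') * (jw_gen k i j * jw_gen k' j l))"
    unfolding jw_obs_def sum_product by (intro sum.cong refl) (simp add: mult_ac)
  also have "\<dots> = (\<Sum>k<m. \<Sum>j<2 ^ m. \<Sum>k'<m. complex_of_real (g k * g k') * (jw_gen k i j * jw_gen k' j l))"
    by (rule sum.swap)
  also have "\<dots> = (\<Sum>k<m. \<Sum>k'<m. \<Sum>j<2 ^ m. complex_of_real (g k * g k') * (jw_gen k i j * jw_gen k' j l))"
    by (rule sum.cong[OF refl], rule sum.swap)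
  also have "\<dots> = (\<Sum>k<m. \<Sum>k'<m. T k k')"
  proof (intro sum.cong refl)
    fix k k' assume k: "k \<in> {..<m}"
    have "(\<Sum>j<2 ^ m. complex_of_real (g k * g k') * (jw_gen k i j * jw_gen k' j l))
        = complex_of_real (g k * g k') * (\<Sum>j<2 ^ m. jw_gen k i j * jw_gen k' j l)"
      by (simp add: sum_distrib_left)
    also have "\<dots> = T k k'"
      unfolding T_def using sum_jw_gen_right[OF i, of k "\<lambda>j. jw_gen k' j l"] k by simp
    finally show "(\<Sum>j<2 ^ m. complex_of_real (g k * g k') * (jw_gen k i j * jw_gen k' j l)) = T k k'" .
  qed
  also have "\<dots> = (\<Sum>k<m. T k k)"
  proof (rule sum_sum_antisymmetric)
    fix k k' :: nat assume "k \<noteq> k'"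
    then have "jw_sign k i * jw_gen k' (flip_bit k i) l + jw_sign k' i * jw_gen k (flip_bit k' i) l = 0"
      by (rule jw_gen_anticommute)
    moreover have "T k k' + T k' k = complex_of_real (g k * g k') * (jw_sign k i * jw_gen k' (flip_bit k i) l + jw_sign k' i * jw_gen k (flip_bit k' i) l)"
      unfolding T_def by (simp add: distrib_left mult.commute)
    ultimately show "T k k' + T k' k = 0" by simp
  qed
  also have "\<dots> = (\<Sum>k<m. complex_of_real ((g k)^2) * (if l = i then 1 else 0))"
  proof (intro sum.cong refl)
    fix k :: nat
    have "jw_sign k i * jw_gen k (flip_bit k i) l = (if l = i then 1 else 0)"
      unfolding jw_gen_def by (simp add: flip_bit_flip_bit jw_sign_flip_bit_ge jw_sign_square)
    then show "T k k = complex_of_real ((g k)^2) * (if l = i then 1 else 0)"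
      unfolding T_def by (simp add: power2_eq_square)
  qed
  also have "\<dots> = complex_of_real (\<Sum>k<m. (g k)^2) * (if l = i then 1 else 0)"
    by (simp add: sum_distrib_right)
  finally show ?thesis using unit by simp
qed

lemma is_eigenvalue_involution:
  assumes square: "\<And>i l. i < d \<Longrightarrow> l < d \<Longrightarrow> (\<Sum>j<d. M i j * M j l) = (if l = i then 1 else 0)"
    and "is_eigenvalue d M ev"
  shows "ev = 1 \<or> ev = -1"
proof -
  obtain v where v: "\<exists>i<d. v i \<noteq> 0" and ev: "\<And>i. i < d \<Longrightarrow> (\<Sum>j<d. M i j * v j) = ev * v i"
    using assms(2) unfolding is_eigenvalue_def by blast
  from v obtain i where i: "i < d" "v i \<noteq> 0"
    by blast
  have "ev * ev * v i = ev * (\<Sum>j<d. M i j * v j)"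
    using ev[OF i(1)] by simp
  also have "\<dots> = (\<Sum>j<d. M i j * (ev * v j))"
    by (simp add: sum_distrib_left mult_ac)
  also have "\<dots> = (\<Sum>j<d. M i j * (\<Sum>l<d. M j l * v l))"
    using ev by (intro sum.cong) auto
  also have "\<dots> = (\<Sum>j<d. \<Sum>l<d. M i j * M j l * v l)"
    by (simp add: sum_distrib_left mult.assoc)
  also have "\<dots> = (\<Sum>l<d. (\<Sum>j<d. M i j * M j l) * v l)"
    by (subst sum.swap) (simp add: sum_distrib_right)
  also have "\<dots> = (\<Sum>l<d. if l = i then v l else 0)"
    using square[OF i(1)] by (intro sum.cong) auto
  also have "\<dots> = v i"
    using i by simp
  finally have "ev * ev = 1"
    using i(2) by (metis mult_cancel_right2)
  then show ?thesis
    by (metis power2_eq_square power2_eq_1_iff)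
qed

lemma observable_jw_obs:
  assumes "(\<Sum>k<m. (g k)\<^sup>2) = 1"
  shows "observable (2 ^ m) (jw_obs m g)"
  using hermitian_jw_obs is_eigenvalue_involution[OF jw_obs_square[OF _ _ assms]]
  unfolding observable_def by fastforce

lemma jw_obs_trace_product:
  "(\<Sum>a<2 ^ m. \<Sum>a'<2 ^ m. jw_obs m g a a' * jw_obs m h a a') = of_nat (2 ^ m) * complex_of_real (\<Sum>k<m. g k * h k)"
proof -
  have inner: "(\<Sum>a'<2 ^ m. jw_gen k a a' * jw_gen k' a a') = (if k = k' then 1 else 0)"
    if a: "a < 2 ^ m" and k: "k < m" and k': "k' < m" for a k k'
  proof -
    have "(\<Sum>a'<2 ^ m. jw_gen k a a' * jw_gen k' a a') = jw_sign k a * jw_gen k' a (flip_bit k a)"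
      by (rule sum_jw_gen_right[OF a k])
    also have "\<dots> = (if k = k' then 1 else 0)"
      using flip_bit_neq[of k k' a] unfolding jw_gen_def by (auto simp: jw_sign_square)
    finally show ?thesis .
  qed
  have "(\<Sum>a<2 ^ m. \<Sum>a'<2 ^ m. jw_obs m g a a' * jw_obs m h a a')
      = (\<Sum>a<2 ^ m. \<Sum>a'<2 ^ m. \<Sum>k<m. \<Sum>k'<m. complex_of_real (g k * h k') * (jw_gen k a a' * jw_gen k' a a'))"
    unfolding jw_obs_def sum_product by (intro sum.cong refl) (simp add: mult_ac)
  also have "\<dots> = (\<Sum>a<2 ^ m. \<Sum>k<m. \<Sum>a'<2 ^ m. \<Sum>k'<m. complex_of_real (g k * h k') * (jw_gen k a a' * jw_gen k' a a'))"
    by (rule sum.cong[OF refl], rule sum.swap)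
  also have "\<dots> = (\<Sum>a<2 ^ m. \<Sum>k<m. \<Sum>k'<m. \<Sum>a'<2 ^ m. complex_of_real (g k * h k') * (jw_gen k a a' * jw_gen k' a a'))"
    by (rule sum.cong[OF refl], rule sum.cong[OF refl], rule sum.swap)
  also have "\<dots> = (\<Sum>a<(2::nat) ^ m. \<Sum>k<m. \<Sum>k'<m. if k' = k then complex_of_real (g k * h k) else 0)"
  proof (intro sum.cong refl)
    fix a k k' :: nat assume "a \<in> {..<2 ^ m}" "k \<in> {..<m}" "k' \<in> {..<m}"
    then show "(\<Sum>a'<2 ^ m. complex_of_real (g k * h k') * (jw_gen k a a' * jw_gen k' a a')) = (if k' = k then complex_of_real (g k * h k) else 0)"
      using inner[of a k k'] by (auto simp: sum_distrib_left[symmetric])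
  qed
  also have "\<dots> = (\<Sum>a<(2::nat) ^ m. complex_of_real (\<Sum>k<m. g k * h k))" by simp
  also have "\<dots> = of_nat (2 ^ m) * complex_of_real (\<Sum>k<m. g k * h k)" by simp
  finally show ?thesis .
qed

text \<open>The pure state \<open>\<Phi> = D\<^sup>-\<^sup>1\<^sup>/\<^sup>2 \<Sigma>\<^sub>a e\<^sub>a \<otimes> e\<^sub>a\<close>, where \<open>e\<^sub>a \<otimes> e\<^sub>b\<close> has index \<open>a D + b\<close>.\<close>
definition max_entangled :: "nat \<Rightarrow> nat \<Rightarrow> nat \<Rightarrow> complex" where
  "max_entangled D p q = (if p div D = p mod D \<and> q div D = q mod D then 1 / of_nat D else 0)"

lemma trace_max_entangled: assumes "D \<ge> 1" shows "trace_mat (D * D) (max_entangled D) = 1"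
proof -
  have "trace_mat (D * D) (max_entangled D) = (\<Sum>a<D. \<Sum>b<D. if a = b then 1 / of_nat D else 0)"
    unfolding trace_mat_def max_entangled_def sum_lessThan_square by (intro sum.cong refl) auto
  also have "\<dots> = (\<Sum>a<D. 1 / (of_nat D :: complex))" by simp
  also have "\<dots> = 1" using assms by simp
  finally show ?thesis .
qed

lemma psd_max_entangled: "psd_mat (D * D) (max_entangled D)"
  unfolding psd_mat_def
proof (intro conjI allI)
  show "hermitian_mat (D * D) (max_entangled D)"
    unfolding hermitian_mat_def max_entangled_def by simp
  fix v :: "nat \<Rightarrow> complex"
  define c where "c p = (if p div D = p mod D then 1 else 0 :: complex)" for p
  define S where "S = (\<Sum>q<D * D. c q * v q)"
  have cc: "cnj (c p) = c p" for p by (simp add: c_def)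
  have "(\<Sum>i<D * D. \<Sum>j<D * D. cnj (v i) * max_entangled D i j * v j) = (\<Sum>i<D * D. \<Sum>j<D * D. (cnj (v i) * c i) * (c j * v j) / of_nat D)"
    unfolding max_entangled_def c_def by (intro sum.cong refl) auto
  also have "\<dots> = (\<Sum>i<D * D. \<Sum>j<D * D. (cnj (v i) * c i) * (c j * v j)) / of_nat D"
    by (simp add: sum_divide_distrib)
  also have "(\<Sum>i<D * D. \<Sum>j<D * D. (cnj (v i) * c i) * (c j * v j)) = cnj S * S"
    unfolding S_def sum_product[symmetric] by (simp add: cnj_sum cc mult.commute)
  also have "cnj S * S / of_nat D = complex_of_real ((cmod S)\<^sup>2 / real D)"
    by (simp add: cnj_mult_self)
  finally have e: "(\<Sum>i<D * D. \<Sum>j<D * D. cnj (v i) * max_entangled D i j * v j) = complex_of_real ((cmod S)^2 / real D)" .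
  show "let q = \<Sum>i<D * D. \<Sum>j<D * D. cnj (v i) * max_entangled D i j * v j in q \<in> \<real> \<and> 0 \<le> Re q"
    unfolding Let_def e by simp
qed

lemma trace_kron_max_entangled:
  assumes D: "D \<ge> 1"
  shows "trace_mat (D * D) (mat_mult (D * D) (kron D A B) (max_entangled D)) = (\<Sum>a<D. \<Sum>a'<D. A a a' * B a a') / of_nat D"
proof -
  have "trace_mat (D * D) (mat_mult (D * D) (kron D A B) (max_entangled D))
     = (\<Sum>a<D. \<Sum>b<D. \<Sum>a'<D. \<Sum>b'<D. A a a' * B b b' * (if a' = b' \<and> a = b then 1 / of_nat D else 0))"
    unfolding trace_mat_def mat_mult_def sum_lessThan_square kron_def max_entangled_def by (intro sum.cong refl) auto
  also have "\<dots> = (\<Sum>a<D. \<Sum>b<D. if b = a then (\<Sum>a'<D. A a a' * B a a' / of_nat D) else 0)"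
  proof (intro sum.cong refl)
    fix a b assume "a \<in> {..<D}" "b \<in> {..<D}"
    have "(\<Sum>a'<D. \<Sum>b'<D. A a a' * B b b' * (if a' = b' \<and> a = b then 1 / of_nat D else 0))
        = (\<Sum>a'<D. \<Sum>b'<D. if b' = a' then (if b = a then A a a' * B a a' / of_nat D else 0) else 0)"
      by (intro sum.cong refl) auto
    also have "\<dots> = (if b = a then (\<Sum>a'<D. A a a' * B a a' / of_nat D) else 0)" by simp
    finally show "(\<Sum>a'<D. \<Sum>b'<D. A a a' * B b b' * (if a' = b' \<and> a = b then 1 / of_nat D else 0))
        = (if b = a then (\<Sum>a'<D. A a a' * B a a' / of_nat D) else 0)" .
  qed
  also have "\<dots> = (\<Sum>a<D. \<Sum>a'<D. A a a' * B a a' / of_nat D)" by simp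
  also have "\<dots> = (\<Sum>a<D. \<Sum>a'<D. A a a' * B a a') / of_nat D"
    by (simp add: sum_divide_distrib)
  finally show ?thesis .
qed

lemma unit_gram_in_Cor:
  fixes X :: "real^'n^'n" and g :: "'n \<Rightarrow> nat \<Rightarrow> real"
  assumes gram: "\<And>x y. X $ x $ y = (\<Sum>k<m. g x k * g y k)"
    and unit: "\<And>x. (\<Sum>k<m. (g x k)\<^sup>2) = 1"
  shows "X \<in> Cor"
proof -
  define D :: nat where "D = 2 ^ m"
  have D: "D \<ge> 1"
    by (simp add: D_def)
  have bounds: "-1 \<le> X $ x $ y \<and> X $ x $ y \<le> 1" for x y
  proof -
    have "(X $ x $ y)\<^sup>2 \<le> (\<Sum>k<m. (g x k)\<^sup>2) * (\<Sum>k<m. (g y k)\<^sup>2)"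
      unfolding gram by (rule Cauchy_Schwarz_ineq_sum)
    then have "(X $ x $ y)\<^sup>2 \<le> 1"
      using unit by simp
    then have "\<bar>X $ x $ y\<bar> \<le> 1"
      by (simp add: abs_square_le_1)
    then show ?thesis
      by (simp add: abs_le_iff)
  qed
  have obs: "observable D (jw_obs m (g x))" for x
    unfolding D_def by (rule observable_jw_obs[OF unit])
  have corr: "complex_of_real (X $ x $ y)
      = trace_mat (D * D) (mat_mult (D * D) (kron D (jw_obs m (g x)) (jw_obs m (g y))) (max_entangled D))" for x y
  proof -
    have "trace_mat (D * D) (mat_mult (D * D) (kron D (jw_obs m (g x)) (jw_obs m (g y))) (max_entangled D))
        = (\<Sum>a<D. \<Sum>a'<D. jw_obs m (g x) a a' * jw_obs m (g y) a a') / of_nat D"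
      by (rule trace_kron_max_entangled[OF D])
    also have "\<dots> = complex_of_real (X $ x $ y)"
      unfolding D_def jw_obs_trace_product gram by simp
    finally show ?thesis ..
  qed
  show ?thesis
    unfolding Cor_def mem_Collect_eq
  proof (intro conjI allI exI)
    show "-1 \<le> X $ x $ y" "X $ x $ y \<le> 1" for x y
      using bounds by simp_all
    show "D \<ge> 1" "psd_mat (D * D) (max_entangled D)" "trace_mat (D * D) (max_entangled D) = 1"
      by (fact D psd_max_entangled trace_max_entangled[OF D])+
    show "observable D (jw_obs m (g x))" "observable D (jw_obs m (g y))" for x y
      by (fact obs)+
    show "complex_of_real (X $ x $ y)
      = trace_mat (D * D) (mat_mult (D * D) (kron D (jw_obs m (g x)) (jw_obs m (g y))) (max_entangled D))" for x y
      by (fact corr)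
  qed
qed

lemma elliptope_real_gram:
  fixes X :: "real^'n^'n"
  assumes "X \<in> elliptope"
  shows "\<exists>m (g :: 'n \<Rightarrow> nat \<Rightarrow> real). \<forall>x y. X $ x $ y = (\<Sum>k<m. g x k * g y k)"
proof -
  have "transpose X = X" and psd: "\<And>v. 0 \<le> v \<bullet> (X *v v)"
    using assms unfolding elliptope_def by blast+
  then have sym: "X $ y $ x = X $ x $ y" for x y
    by (metis transpose_def vec_lambda_beta)
  define R where "R x y = complex_of_real (X $ x $ y)" for x y
  have psd_form: "0 \<le> Re (qform UNIV R v v)" for v
  proof -
    define a :: "real^'n" where "a = (\<chi> x. Re (v x))"
    define b :: "real^'n" where "b = (\<chi> x. Im (v x))"
    have quad: "c \<bullet> (X *v c) = (\<Sum>x\<in>UNIV. \<Sum>y\<in>UNIV. X $ x $ y * (c $ x * c $ y))" for c :: "real^'n"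
      unfolding inner_vec_def matrix_vector_mult_def by (simp add: sum_distrib_left mult_ac)
    have "Re (qform UNIV R v v) = a \<bullet> (X *v a) + b \<bullet> (X *v b)"
      unfolding qform_def R_def a_def b_def quad by (simp add: Re_sum algebra_simps sum.distrib)
    then show ?thesis
      using psd[of a] psd[of b] by simp
  qed
  have herm: "R x y = cnj (R y x)" if "x \<in> UNIV" "y \<in> UNIV" for x y
    unfolding R_def using sym by simp
  obtain G :: "'n \<Rightarrow> 'n \<Rightarrow> complex" where G: "\<And>x y. R x y = (\<Sum>k\<in>UNIV. G x k * cnj (G y k))"
    using psd_gram_factorization[OF finite herm psd_form] by blast
  define r where "r x p = (if snd p then Im (G x (fst p)) else Re (G x (fst p)))" for x and p :: "'n \<times> bool"
  have real_gram: "X $ x $ y = (\<Sum>p\<in>UNIV. r x p * r y p)" for x y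
  proof -
    have "X $ x $ y = (\<Sum>k\<in>UNIV. Re (G x k) * Re (G y k) + Im (G x k) * Im (G y k))"
      using arg_cong[OF G[of x y], of Re] by (simp add: R_def Re_sum)
    also have "\<dots> = (\<Sum>k\<in>UNIV. \<Sum>c\<in>UNIV. r x (k, c) * r y (k, c))"
      unfolding r_def by (simp add: UNIV_bool add.commute)
    also have "\<dots> = (\<Sum>p\<in>UNIV. r x p * r y p)"
      by (simp add: sum.cartesian_product UNIV_Times_UNIV[symmetric] del: UNIV_Times_UNIV)
    finally show ?thesis .
  qed
  obtain h :: "nat \<Rightarrow> 'n \<times> bool" where h: "bij_betw h {0..<card (UNIV :: ('n \<times> bool) set)} UNIV"
    using ex_bij_betw_nat_finite[of "UNIV :: ('n \<times> bool) set"] by auto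
  have "X $ x $ y = (\<Sum>k<card (UNIV :: ('n \<times> bool) set). r x (h k) * r y (h k))" for x y
    unfolding real_gram lessThan_atLeast0 by (rule sum.reindex_bij_betw[OF h, symmetric])
  then show ?thesis
    by (intro exI[of _ "card (UNIV :: ('n \<times> bool) set)"] exI[of _ "\<lambda>x k. r x (h k)"]) simp
qed

lemma elliptope_subset_Cor: "elliptope \<subseteq> Cor"
proof
  fix X
  assume X: "X \<in> elliptope"
  then obtain m and g :: "_ \<Rightarrow> nat \<Rightarrow> real" where gram: "\<And>x y. X $ x $ y = (\<Sum>k<m. g x k * g y k)"
    using elliptope_real_gram by blast
  have diag: "X $ x $ x = 1" for x
    using X unfolding elliptope_def by blast
  have "(\<Sum>k<m. (g x k)\<^sup>2) = 1" for x
    using gram[of x x] unfolding diag by (simp add: power2_eq_square)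
  with gram show "X \<in> Cor"
    by (rule unit_gram_in_Cor)
qed

section \<open>Extreme points\<close>

lemma extreme_point_of_superset:
  assumes "x extreme_point_of S" "S \<subseteq> T"
    and "\<And>a b. a \<in> T \<Longrightarrow> b \<in> T \<Longrightarrow> x \<in> open_segment a b \<Longrightarrow> a \<in> S \<and> b \<in> S"
  shows "x extreme_point_of T"
  using assms unfolding extreme_point_of_def by blast

lemma open_segment_unit_diagonal:
  fixes X a b :: "real^'n^'n"
  assumes X: "X \<in> open_segment a b" and diag: "X $ i $ i = 1"
    and "a $ i $ i \<le> 1" "b $ i $ i \<le> 1"
  shows "a $ i $ i = 1 \<and> b $ i $ i = 1"
proof -
  obtain u where u: "0 < u" "u < 1" and "X = (1 - u) *\<^sub>R a + u *\<^sub>R b"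
    using X by (auto simp: in_segment)
  then have "X $ i $ i = (1 - u) * a $ i $ i + u * b $ i $ i"
    by simp
  then have "(1 - u) * (1 - a $ i $ i) + u * (1 - b $ i $ i) = 0"
    using diag by (simp add: algebra_simps)
  moreover have "0 \<le> (1 - u) * (1 - a $ i $ i)" "0 \<le> u * (1 - b $ i $ i)"
    using u assms(3,4) by simp_all
  ultimately show ?thesis
    using u by (smt (verit) mult_eq_0_iff)
qed

theorem proposition5p10:
  fixes X :: "real^'n^'n"
  assumes "X extreme_point_of elliptope"
  shows "X extreme_point_of Cor"
proof (rule extreme_point_of_superset[OF assms elliptope_subset_Cor])
  fix a b
  assume a: "a \<in> Cor" and b: "b \<in> Cor" and X: "X \<in> open_segment a b"
  have "X $ i $ i = 1" for i
    using assms unfolding extreme_point_of_def elliptope_def by blast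
  moreover have "a $ i $ i \<le> 1" "b $ i $ i \<le> 1" for i
    using a b unfolding Cor_def by blast+
  ultimately have "a $ i $ i = 1" "b $ i $ i = 1" for i
    using open_segment_unit_diagonal[OF X] by blast+
  then show "a \<in> elliptope \<and> b \<in> elliptope"
    using Cor_unit_diagonal_in_elliptope a b by blast
qed

end
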